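(* Let $R$ be the ring of integers of a number field, $\mathfrak a$ a fractional ideal of $R$, $\mathfrak p$ a nonzero prime of $R$ with completion $R_{\mathfrak p}$, uniformizer $\varpi$ and $\mathfrak aR_{\mathfrak p}=\varpi^kR_{\mathfrak p}$. Let $(V_{\mathfrak a})_{\mathfrak p}=\{ax^3+3bx^2y+3cxy^2+dy^3: a\in\varpi^kR_{\mathfrak p},b\in R_{\mathfrak p},c\in\varpi^{-k}R_{\mathfrak p},d\in\varpi^{-2k}R_{\mathfrak p}\}$ with Haar measure $\mu$ normalized to give it volume $1$, and let $\mathcal P_{\mathfrak p}\subset(V_{\mathfrak a})_{\mathfrak p}$ be the set of forms for which $b^2-ac$, $\varpi^k(ad-bc)$, $\varpi^{2k}(c^2-bd)$ do not all lie in $\mathfrak pR_{\mathfrak p}$. Then $\mu(\mathcal P_{\mathfrak p})=1-N(\mathfrak p)^{-2}$.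
   Context: $N(\mathfrak p)=\#R/\mathfrak p$. $\mathcal P_{\mathfrak p}$ is the $\mathfrak p$-adic closure of the set of projective forms in $V_{\mathfrak a}$, where $f=ax^3+3bx^2y+3cxy^2+dy^3\in V_{\mathfrak a}$ is projective if no prime divides all of $(b^2-ac)R,(ad-bc)\mathfrak a,(c^2-bd)\mathfrak a^2$. *)

theory Defs
  imports "HOL-Analysis.Analysis"
begin

text \<open>Abstract model of the completion: a field K (the type 'k, of characteristic 0),
  its valuation ring R (a subset), a uniformizer w. A binary form
  a x^3 + 3 b x^2 y + 3 c x y^2 + d y^3 is identified with its coefficient tuple (a,b,c,d).\<close>

type_synonym 'k form4 = "'k \<times> 'k \<times> 'k \<times> 'k"

definition ideal_pow :: "'k::field set \<Rightarrow> 'k \<Rightarrow> int \<Rightarrow> 'k set" where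
  "ideal_pow R w n = {w powi n * x | x. x \<in> R}"

definition residue_classes :: "'k::field set \<Rightarrow> 'k \<Rightarrow> 'k set set" where
  "residue_classes R w = (\<lambda>x. {y \<in> R. y - x \<in> ideal_pow R w 1}) ` R"

definition complete_dvr :: "'k::field set \<Rightarrow> 'k \<Rightarrow> nat \<Rightarrow> bool" where
  "complete_dvr R w q \<longleftrightarrow>
     0 \<in> R \<and> 1 \<in> R \<and> (\<forall>x\<in>R. \<forall>y\<in>R. x + y \<in> R \<and> - x \<in> R \<and> x * y \<in> R)
   \<and> w \<in> R \<and> w \<noteq> 0 \<and> inverse w \<notin> R
   \<and> (\<forall>x. x \<noteq> 0 \<longrightarrow> (\<exists>u n. u \<in> R \<and> inverse u \<in> R \<and> x = u * w powi n))
   \<and> finite (residue_classes R w) \<and> card (residue_classes R w) = q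
   \<and> (\<forall>s :: nat \<Rightarrow> 'k. (\<forall>i. s i \<in> R) \<longrightarrow>
        (\<forall>m::nat. \<exists>N. \<forall>i\<ge>N. \<forall>j\<ge>N. s i - s j \<in> ideal_pow R w (int m)) \<longrightarrow>
        (\<exists>y\<in>R. \<forall>m::nat. \<exists>N. \<forall>i\<ge>N. y - s i \<in> ideal_pow R w (int m)))"

definition Vloc :: "'k::field set \<Rightarrow> 'k \<Rightarrow> int \<Rightarrow> 'k form4 set" where
  "Vloc R w k = {(a, b, c, d). a \<in> ideal_pow R w k \<and> b \<in> R \<and>
                 c \<in> ideal_pow R w (- k) \<and> d \<in> ideal_pow R w (- 2 * k)}"

definition Ploc :: "'k::field set \<Rightarrow> 'k \<Rightarrow> int \<Rightarrow> 'k form4 set" where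
  "Ploc R w k = {(a, b, c, d) \<in> Vloc R w k.
      \<not> (b\<^sup>2 - a * c \<in> ideal_pow R w 1 \<and>
         w powi k * (a * d - b * c) \<in> ideal_pow R w 1 \<and>
         w powi (2 * k) * (c\<^sup>2 - b * d) \<in> ideal_pow R w 1)}"

definition add4 :: "'k::field form4 \<Rightarrow> 'k form4 \<Rightarrow> 'k form4" where
  "add4 v x = (case v of (a, b, c, d) \<Rightarrow> case x of (a', b', c', d') \<Rightarrow>
                 (a + a', b + b', c + c', d + d'))"

definition nbhd4 :: "'k::field set \<Rightarrow> 'k \<Rightarrow> 'k form4 \<Rightarrow> nat \<Rightarrow> 'k form4 set" where
  "nbhd4 R w x n = {y. \<exists>z1 z2 z3 z4. z1 \<in> ideal_pow R w (int n) \<and> z2 \<in> ideal_pow R w (int n)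
       \<and> z3 \<in> ideal_pow R w (int n) \<and> z4 \<in> ideal_pow R w (int n) \<and> y = add4 x (z1, z2, z3, z4)}"

definition adic_open4 :: "'k::field set \<Rightarrow> 'k \<Rightarrow> 'k form4 set \<Rightarrow> bool" where
  "adic_open4 R w U \<longleftrightarrow> (\<forall>x\<in>U. \<exists>n. nbhd4 R w x n \<subseteq> U)"

definition borel_V :: "'k::field set \<Rightarrow> 'k \<Rightarrow> int \<Rightarrow> 'k form4 set set" where
  "borel_V R w k = sigma_sets (Vloc R w k) {U \<inter> Vloc R w k | U. adic_open4 R w U}"

definition haar_prob_V :: "'k::field set \<Rightarrow> 'k \<Rightarrow> int \<Rightarrow> 'k form4 measure \<Rightarrow> bool" where
  "haar_prob_V R w k \<mu> \<longleftrightarrow>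
     space \<mu> = Vloc R w k \<and> sets \<mu> = borel_V R w k \<and> emeasure \<mu> (Vloc R w k) = 1 \<and>
     (\<forall>v\<in>Vloc R w k. \<forall>A\<in>sets \<mu>. emeasure \<mu> (add4 v ` A) = emeasure \<mu> A)"

end

theory Submission
  imports Defs
begin

text \<open>Rescaling the coordinates a, c, d by w^k, w^-k, w^-2k identifies (V_a)_p with R^4 and turns
  projectivity into the condition that the Hessian coefficients b^2 - ac, ad - bc, c^2 - bd of the
  form do not all lie in \<pp>. This condition only depends on the residues of a, b, c, d, so (V_a)_p
  is the disjoint union of q^4 translates of one open block, all of Haar measure q^-4, and the
  non-projective forms fill exactly the blocks whose reduction has vanishing Hessian. Over the
  residue field these reductions are the cubes (a x + b y)^3 / a^2 with a a unit and d y^3,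
  that is q^2 of them, so the measure is 1 - q^2 / q^4.\<close>

lemma add4_image_Times:
  "add4 (x1, x2, x3, x4) ` (A1 \<times> A2 \<times> A3 \<times> A4) =
     (\<lambda>e. x1 + e) ` A1 \<times> (\<lambda>e. x2 + e) ` A2 \<times> (\<lambda>e. x3 + e) ` A3 \<times> (\<lambda>e. x4 + e) ` A4"
    (is "?L = ?R")
proof (rule set_eqI)
  fix p :: "'a::field form4"
  obtain p1 p2 p3 p4 where p: "p = (p1, p2, p3, p4)"
    by (cases p)
  have "p \<in> ?L \<longleftrightarrow> p1 - x1 \<in> A1 \<and> p2 - x2 \<in> A2 \<and> p3 - x3 \<in> A3 \<and> p4 - x4 \<in> A4"
    by (force simp: p add4_def image_iff algebra_simps)
  also have "\<dots> \<longleftrightarrow> p \<in> ?R"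
    by (force simp: p image_iff algebra_simps)
  finally show "p \<in> ?L \<longleftrightarrow> p \<in> ?R" .
qed

lemma emeasure_Union_equal_parts:
  assumes "finite I" "J \<subseteq> I" "disjoint_family_on B I" "B ` I \<subseteq> sets M"
    and equal: "\<And>i. i \<in> I \<Longrightarrow> emeasure M (B i) = e"
    and total: "emeasure M (\<Union>i\<in>I. B i) = 1"
  shows "emeasure M (\<Union>i\<in>J. B i) = ennreal (card J / card I)"
proof -
  have sum: "emeasure M (\<Union>i\<in>K. B i) = of_nat (card K) * e" if "K \<subseteq> I" for K
  proof -
    have "emeasure M (\<Union>i\<in>K. B i) = (\<Sum>i\<in>K. emeasure M (B i))"
      using that assms(1,3,4)
      by (intro sum_emeasure[symmetric] disjoint_family_on_mono[of K I])
         (auto intro: finite_subset)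
    also have "\<dots> = of_nat (card K) * e"
      using that equal by (simp add: subset_iff)
    finally show ?thesis .
  qed
  have one: "of_nat (card I) * e = 1"
    using sum[of I] total by simp
  then have "card I \<noteq> 0"
    by (intro notI) simp
  with one have "e \<noteq> \<infinity>"
    by (intro notI) (simp add: ennreal_mult_top)
  then obtain r where r: "e = ennreal r" "r \<ge> 0"
    by (cases e) auto
  then have "real (card I) * r = 1"
    using one by (simp add: ennreal_of_nat_eq_real_of_nat ennreal_mult'[symmetric] ennreal_eq_1)
  then have "r = 1 / card I"
    using \<open>card I \<noteq> 0\<close> by (simp add: field_simps)
  then show ?thesis
    using sum[OF assms(2)] r
    by (simp add: ennreal_of_nat_eq_real_of_nat ennreal_mult'[symmetric])
qed

lemma emeasure_Diff_Union_equal_parts: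
  assumes "finite I" "J \<subseteq> I" "disjoint_family_on B I" "B ` I \<subseteq> sets M"
    and "\<And>i. i \<in> I \<Longrightarrow> emeasure M (B i) = e"
    and "emeasure M (\<Union>i\<in>I. B i) = 1"
  shows "emeasure M ((\<Union>i\<in>I. B i) - (\<Union>i\<in>J. B i)) = ennreal (1 - card J / card I)"
proof -
  have J: "emeasure M (\<Union>i\<in>J. B i) = ennreal (card J / card I)"
    by (rule emeasure_Union_equal_parts[OF assms])
  have "finite J" "B ` J \<subseteq> sets M"
    using assms(1,2,4) finite_subset by blast+
  then have "emeasure M ((\<Union>i\<in>I. B i) - (\<Union>i\<in>J. B i)) =
      emeasure M (\<Union>i\<in>I. B i) - emeasure M (\<Union>i\<in>J. B i)"
    using assms(1,2,4) by (intro emeasure_Diff) (auto simp: J)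
  also have "\<dots> = ennreal (1 - card J / card I)"
    using assms(6) J by (simp add: ennreal_minus ennreal_1[symmetric] del: ennreal_1)
  finally show ?thesis .
qed

section \<open>Discrete valuation rings\<close>

locale dvr =
  fixes R :: "'k::field set" and w :: 'k
  assumes zero_in_R: "0 \<in> R" and one_in_R: "1 \<in> R"
    and add_in_R: "x \<in> R \<Longrightarrow> y \<in> R \<Longrightarrow> x + y \<in> R"
    and uminus_in_R: "x \<in> R \<Longrightarrow> - x \<in> R"
    and mult_in_R: "x \<in> R \<Longrightarrow> y \<in> R \<Longrightarrow> x * y \<in> R"
    and w_in_R: "w \<in> R" and w_nonzero: "w \<noteq> 0" and inverse_w_notin_R: "inverse w \<notin> R"
    and unit_times_power: "x \<noteq> 0 \<Longrightarrow> \<exists>u n. u \<in> R \<and> inverse u \<in> R \<and> x = u * w powi n"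

lemma complete_dvr_imp_dvr: "complete_dvr R w q \<Longrightarrow> dvr R w"
  unfolding complete_dvr_def by unfold_locales auto

context dvr
begin

lemma diff_in_R: "x \<in> R \<Longrightarrow> y \<in> R \<Longrightarrow> x - y \<in> R"
  using add_in_R[of x "- y"] uminus_in_R[of y] by simp

lemma power_in_R: "x \<in> R \<Longrightarrow> x ^ n \<in> R"
  by (induction n) (auto intro: mult_in_R one_in_R)

lemma w_powi_in_R: "n \<ge> 0 \<Longrightarrow> w powi n \<in> R"
  using power_in_R[OF w_in_R] by (simp add: power_int_def)

lemma mem_ideal_pow_iff: "x \<in> ideal_pow R w n \<longleftrightarrow> w powi (- n) * x \<in> R"
proof
  assume "x \<in> ideal_pow R w n"
  then show "w powi (- n) * x \<in> R"
    unfolding ideal_pow_def using w_nonzero by (auto simp: power_int_minus field_simps)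
next
  assume "w powi (- n) * x \<in> R"
  moreover have "x = w powi n * (w powi (- n) * x)"
    using w_nonzero by (simp add: power_int_minus)
  ultimately show "x \<in> ideal_pow R w n"
    unfolding ideal_pow_def by blast
qed

lemma ideal_pow_0 [simp]: "ideal_pow R w 0 = R"
  by (simp add: mem_ideal_pow_iff set_eq_iff)

lemma ideal_pow_antimono: "m \<le> n \<Longrightarrow> ideal_pow R w n \<subseteq> ideal_pow R w m"
proof
  fix x assume "m \<le> n" "x \<in> ideal_pow R w n"
  then have "w powi (n - m) * (w powi (- n) * x) \<in> R"
    by (simp add: mem_ideal_pow_iff mult_in_R w_powi_in_R)
  then show "x \<in> ideal_pow R w m"
    using w_nonzero by (simp add: mem_ideal_pow_iff mult.assoc[symmetric] power_int_add[symmetric])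
qed

lemma power_mult_mem_ideal_pow:
  "x \<in> ideal_pow R w n \<Longrightarrow> w powi j * x \<in> ideal_pow R w (n + j)"
  using w_nonzero
  by (simp add: mem_ideal_pow_iff mult.assoc[symmetric] power_int_add[symmetric])

abbreviation \<pp> :: "'k set" where "\<pp> \<equiv> ideal_pow R w 1"

lemma mem_\<pp>_iff: "x \<in> \<pp> \<longleftrightarrow> inverse w * x \<in> R"
  by (simp add: mem_ideal_pow_iff power_int_minus)

lemma \<pp>_subset_R: "\<pp> \<subseteq> R"
  using ideal_pow_antimono[of 0 1] by simp

lemma zero_in_\<pp>: "0 \<in> \<pp>"
  by (simp add: mem_\<pp>_iff zero_in_R)

lemma add_in_\<pp>: "x \<in> \<pp> \<Longrightarrow> y \<in> \<pp> \<Longrightarrow> x + y \<in> \<pp>"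
  by (simp add: mem_\<pp>_iff distrib_left add_in_R)

lemma uminus_in_\<pp>: "x \<in> \<pp> \<Longrightarrow> - x \<in> \<pp>"
  by (simp add: mem_\<pp>_iff uminus_in_R)

lemma diff_in_\<pp>: "x \<in> \<pp> \<Longrightarrow> y \<in> \<pp> \<Longrightarrow> x - y \<in> \<pp>"
  using add_in_\<pp>[of x "- y"] uminus_in_\<pp>[of y] by simp

lemma mult_in_\<pp>: "x \<in> R \<Longrightarrow> y \<in> \<pp> \<Longrightarrow> x * y \<in> \<pp>"
  using mult_in_R[of x "inverse w * y"] by (simp add: mem_\<pp>_iff ac_simps)

lemma inverse_in_R: assumes "x \<in> R" "x \<notin> \<pp>" shows "inverse x \<in> R"
proof -
  have "x \<noteq> 0" using assms zero_in_\<pp> by auto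
  then obtain u n where u: "u \<in> R" "inverse u \<in> R" "x = u * w powi n"
    using unit_times_power by blast
  have "n = 0"
  proof (rule ccontr)
    assume "n \<noteq> 0"
    then consider "n \<ge> 1" | "n \<le> -1" by linarith
    then show False
    proof cases
      case 1
      then have "inverse w * x \<in> R"
        using u w_nonzero mult_in_R[OF u(1) w_powi_in_R[of "n - 1"]]
        by (simp add: power_int_diff field_simps)
      then show False using assms by (simp add: mem_\<pp>_iff)
    next
      case 2
      have "inverse w = x * inverse u * w powi (- n - 1)"
        using u w_nonzero \<open>x \<noteq> 0\<close> by (simp add: power_int_diff power_int_minus field_simps)
      then show False
        using 2 mult_in_R[OF mult_in_R[OF assms(1) u(2)] w_powi_in_R[of "- n - 1"]]
          inverse_w_notin_R by simp
    qed
  qed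
  then show ?thesis using u by simp
qed

lemma \<pp>_prime: assumes "x \<in> R" "y \<in> R" "x * y \<in> \<pp>" shows "x \<in> \<pp> \<or> y \<in> \<pp>"
proof (rule ccontr)
  assume "\<not> (x \<in> \<pp> \<or> y \<in> \<pp>)"
  moreover from this have "inverse x * (x * y) \<in> \<pp>"
    using assms inverse_in_R mult_in_\<pp> by blast
  moreover have "x \<noteq> 0" using calculation zero_in_\<pp> by auto
  ultimately show False by (simp add: mult.assoc[symmetric])
qed

lemma mult_cong_\<pp>:
  assumes "x \<in> R" "y' \<in> R" "x - x' \<in> \<pp>" "y - y' \<in> \<pp>"
  shows "x * y - x' * y' \<in> \<pp>"
proof -
  have "x * y - x' * y' = x * (y - y') + (x - x') * y'"
    by (simp add: algebra_simps)
  then show ?thesis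
    using assms add_in_\<pp> mult_in_\<pp> by (metis mult.commute)
qed

lemma diff_in_\<pp>_imp_iff: "x - y \<in> \<pp> \<Longrightarrow> x \<in> \<pp> \<longleftrightarrow> y \<in> \<pp>"
  using diff_in_\<pp>[of x "x - y"] add_in_\<pp>[of "x - y" y] by auto

definition res_class :: "'k \<Rightarrow> 'k set" where
  "res_class x = {y \<in> R. y - x \<in> \<pp>}"

abbreviation residues :: "'k set set" where
  "residues \<equiv> res_class ` R"

lemma residue_classes_eq: "residue_classes R w = residues"
  by (simp add: residue_classes_def res_class_def)

lemma res_class_self: "x \<in> R \<Longrightarrow> x \<in> res_class x"
  by (simp add: res_class_def zero_in_\<pp>)

lemma res_class_eq_iff:
  assumes "x \<in> R" "y \<in> R"
  shows "res_class x = res_class y \<longleftrightarrow> x - y \<in> \<pp>"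
proof
  assume "res_class x = res_class y"
  then show "x - y \<in> \<pp>"
    using res_class_self[OF assms(1)] by (simp add: res_class_def)
next
  assume "x - y \<in> \<pp>"
  then have "y - x \<in> \<pp>"
    using uminus_in_\<pp> by fastforce
  then have "z - x \<in> \<pp> \<longleftrightarrow> z - y \<in> \<pp>" for z
    using diff_in_\<pp>_imp_iff[of "z - x" "z - y"] by simp
  then show "res_class x = res_class y"
    by (simp add: res_class_def)
qed

lemma res_class_eq_0_iff: "x \<in> R \<Longrightarrow> res_class x = res_class 0 \<longleftrightarrow> x \<in> \<pp>"
  by (simp add: res_class_eq_iff zero_in_R)

lemma res_class_eq_of_mem: "x \<in> R \<Longrightarrow> y \<in> res_class x \<Longrightarrow> res_class y = res_class x"
  using res_class_eq_iff[of y x] by (auto simp only: res_class_def mem_Collect_eq)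

lemma mem_res_class_iff:
  assumes "x \<in> R"
  shows "y \<in> res_class x \<longleftrightarrow> y \<in> R \<and> res_class y = res_class x"
proof
  assume y: "y \<in> res_class x"
  then have "y \<in> R"
    unfolding res_class_def by simp
  with y show "y \<in> R \<and> res_class y = res_class x"
    using res_class_eq_of_mem[OF assms] by simp
qed (metis res_class_self)

lemma res_class_translate:
  assumes "x \<in> R"
  shows "res_class x = (\<lambda>e. x + e) ` res_class 0"
proof
  show "res_class x \<subseteq> (\<lambda>e. x + e) ` res_class 0"
  proof
    fix y assume "y \<in> res_class x"
    then have "y - x \<in> res_class 0"
      using assms diff_in_R by (simp add: res_class_def)
    then show "y \<in> (\<lambda>e. x + e) ` res_class 0"
      by (rule rev_image_eqI) simp
  qed
  show "(\<lambda>e. x + e) ` res_class 0 \<subseteq> res_class x"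
    using assms by (auto simp: res_class_def add_in_R)
qed

section \<open>Forms with vanishing Hessian modulo \<pp>\<close>

abbreviation R4 :: "'k form4 set" where
  "R4 \<equiv> R \<times> R \<times> R \<times> R"

fun res_class4 :: "'k form4 \<Rightarrow> 'k set form4" where
  "res_class4 (a, b, c, d) = (res_class a, res_class b, res_class c, res_class d)"

fun hessian_vanishes :: "'k form4 \<Rightarrow> bool" where
  "hessian_vanishes (a, b, c, d) \<longleftrightarrow>
     b\<^sup>2 - a * c \<in> \<pp> \<and> a * d - b * c \<in> \<pp> \<and> c\<^sup>2 - b * d \<in> \<pp>"

lemma hessian_vanishes_cong:
  assumes "(a, b, c, d) \<in> R4" "(a', b', c', d') \<in> R4"
    and "res_class4 (a, b, c, d) = res_class4 (a', b', c', d')"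
  shows "hessian_vanishes (a, b, c, d) \<longleftrightarrow> hessian_vanishes (a', b', c', d')"
proof -
  have cong: "a - a' \<in> \<pp>" "b - b' \<in> \<pp>" "c - c' \<in> \<pp>" "d - d' \<in> \<pp>"
    using assms by (simp_all add: res_class_eq_iff)
  have products: "b * b - b' * b' \<in> \<pp>" "a * c - a' * c' \<in> \<pp>" "a * d - a' * d' \<in> \<pp>"
    "b * c - b' * c' \<in> \<pp>" "c * c - c' * c' \<in> \<pp>" "b * d - b' * d' \<in> \<pp>"
    using assms cong by (auto intro: mult_cong_\<pp>)
  have "(b\<^sup>2 - a * c) - (b'\<^sup>2 - a' * c') = (b * b - b' * b') - (a * c - a' * c')"
    "(a * d - b * c) - (a' * d' - b' * c') = (a * d - a' * d') - (b * c - b' * c')"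
    "(c\<^sup>2 - b * d) - (c'\<^sup>2 - b' * d') = (c * c - c' * c') - (b * d - b' * d')"
    by (simp_all add: power2_eq_square)
  then have "(b\<^sup>2 - a * c) - (b'\<^sup>2 - a' * c') \<in> \<pp>"
    "(a * d - b * c) - (a' * d' - b' * c') \<in> \<pp>"
    "(c\<^sup>2 - b * d) - (c'\<^sup>2 - b' * d') \<in> \<pp>"
    using products by (metis diff_in_\<pp>)+
  then show ?thesis
    by (simp add: diff_in_\<pp>_imp_iff)
qed

lemma res_class4_hessian_vanishes_nonunit:
  assumes "(a, b, c, d) \<in> R4" "hessian_vanishes (a, b, c, d)" "a \<in> \<pp>"
  shows "res_class4 (a, b, c, d) = res_class4 (0, 0, 0, d)"
proof -
  have "b * b \<in> \<pp>"
    using assms add_in_\<pp>[of "b\<^sup>2 - a * c" "a * c"] mult_in_\<pp>[of c a]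
    by (simp add: power2_eq_square mult.commute)
  then have "b \<in> \<pp>"
    using assms \<pp>_prime by auto
  then have "c * c \<in> \<pp>"
    using assms add_in_\<pp>[of "c\<^sup>2 - b * d" "b * d"] mult_in_\<pp>[of d b]
    by (simp add: power2_eq_square mult.commute)
  then have "c \<in> \<pp>"
    using assms \<pp>_prime by auto
  with \<open>b \<in> \<pp>\<close> show ?thesis
    using assms by (simp add: res_class_eq_0_iff)
qed

lemma cube_coeffs_in_R:
  assumes "a \<in> R" "b \<in> R" "a \<notin> \<pp>"
  shows "b\<^sup>2 / a \<in> R" "b ^ 3 / a\<^sup>2 \<in> R"
  using assms inverse_in_R
  by (simp_all add: divide_inverse power_inverse[symmetric] mult_in_R power_in_R)

lemma res_class4_hessian_vanishes_unit:
  assumes "(a, b, c, d) \<in> R4" "hessian_vanishes (a, b, c, d)" "a \<notin> \<pp>"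
  shows "res_class4 (a, b, c, d) = res_class4 (a, b, b\<^sup>2 / a, b ^ 3 / a\<^sup>2)"
proof -
  have inv: "inverse a \<in> R" and "a \<noteq> 0"
    using assms inverse_in_R zero_in_\<pp> by auto
  have "c - b\<^sup>2 / a = - (inverse a * (b\<^sup>2 - a * c))"
    using \<open>a \<noteq> 0\<close> by (simp add: field_simps)
  then have c: "c - b\<^sup>2 / a \<in> \<pp>"
    using assms inv by (simp add: mult_in_\<pp> uminus_in_\<pp>)
  have "d - b ^ 3 / a\<^sup>2 = inverse a * (a * d - b * c) + (b * inverse a) * (c - b\<^sup>2 / a)"
    using \<open>a \<noteq> 0\<close> by (simp add: field_simps power2_eq_square power3_eq_cube)
  then have d: "d - b ^ 3 / a\<^sup>2 \<in> \<pp>"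
    using assms inv c by (simp add: add_in_\<pp> mult_in_\<pp> mult_in_R)
  show ?thesis
    using assms c d cube_coeffs_in_R[of a b] by (simp add: res_class_eq_iff)
qed

lemma hessian_vanishes_cube: "a \<noteq> 0 \<Longrightarrow> hessian_vanishes (a, b, b\<^sup>2 / a, b ^ 3 / a\<^sup>2)"
  using zero_in_\<pp> by (simp add: field_simps power2_eq_square power3_eq_cube)

lemma hessian_vanishes_pure_cube: "hessian_vanishes (0, 0, 0, d)"
  using zero_in_\<pp> by (simp add: power2_eq_square)

definition nonprojective_residues :: "'k set form4 set" where
  "nonprojective_residues = {res_class4 t | t. t \<in> R4 \<and> hessian_vanishes t}"

lemma nonprojective_residues_cases:
  assumes "X \<in> nonprojective_residues"
  obtains (pure_cube) d where "d \<in> R" "X = res_class4 (0, 0, 0, d)"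
  | (cube) a b where "a \<in> R" "b \<in> R" "a \<notin> \<pp>" "X = res_class4 (a, b, b\<^sup>2 / a, b ^ 3 / a\<^sup>2)"
proof -
  obtain a b c d where t: "(a, b, c, d) \<in> R4" "hessian_vanishes (a, b, c, d)"
    and X: "X = res_class4 (a, b, c, d)"
    using assms unfolding nonprojective_residues_def by auto
  show thesis
  proof (cases "a \<in> \<pp>")
    case True
    then show thesis
      using pure_cube[of d] t X res_class4_hessian_vanishes_nonunit[OF t] by simp
  next
    case False
    then show thesis
      using cube[of a b] t X res_class4_hessian_vanishes_unit[OF t] by simp
  qed
qed

text \<open>By the case distinction above, a residue form with vanishing Hessian is determined by the
  residues of (a, b) if a is a unit, and by the residue of d otherwise.\<close>

definition pivot :: "'k set form4 \<Rightarrow> 'k set \<times> 'k set" where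
  "pivot = (\<lambda>(A, B, C, D). if A = res_class 0 then (A, D) else (A, B))"

lemma pivot_pure_cube: "pivot (res_class 0, B, C, D) = (res_class 0, D)"
  by (simp add: pivot_def)

lemma pivot_cube: "a \<in> R \<Longrightarrow> a \<notin> \<pp> \<Longrightarrow> pivot (res_class a, B, C, D) = (res_class a, B)"
  by (simp add: pivot_def res_class_eq_0_iff)

lemma res_class4_in_nonprojective_residues:
  "t \<in> R4 \<Longrightarrow> hessian_vanishes t \<Longrightarrow> res_class4 t \<in> nonprojective_residues"
  unfolding nonprojective_residues_def by blast

lemma inj_on_pivot: "inj_on pivot nonprojective_residues"
proof (rule inj_onI)
  fix X Y assume X: "X \<in> nonprojective_residues" and Y: "Y \<in> nonprojective_residues"
    and eq: "pivot X = pivot Y"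
  have unit_class: "res_class a \<noteq> res_class 0" if "a \<in> R" "a \<notin> \<pp>" for a
    using that res_class_eq_0_iff[of a] by auto
  from X show "X = Y"
  proof (cases rule: nonprojective_residues_cases)
    case X_pure: (pure_cube d)
    from Y show ?thesis
    proof (cases rule: nonprojective_residues_cases)
      case (pure_cube d')
      then show ?thesis
        using X_pure eq by (simp add: pivot_pure_cube)
    next
      case (cube a' b')
      then show ?thesis
        using X_pure eq unit_class[of a', symmetric] by (simp add: pivot_pure_cube pivot_cube)
    qed
  next
    case X_cube: (cube a b)
    from Y show ?thesis
    proof (cases rule: nonprojective_residues_cases)
      case (pure_cube d')
      then show ?thesis
        using X_cube eq unit_class[of a] by (simp add: pivot_pure_cube pivot_cube)
    next
      case (cube a' b')
      \<comment> \<open>t has the residues of X and the first two coordinates of Y\<close>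
      define t where "t = (a', b', b\<^sup>2 / a, b ^ 3 / a\<^sup>2)"
      have in_R4: "(a, b, b\<^sup>2 / a, b ^ 3 / a\<^sup>2) \<in> R4" "t \<in> R4"
        using X_cube cube cube_coeffs_in_R[of a b] by (simp_all add: t_def)
      have "res_class a = res_class a'" "res_class b = res_class b'"
        using X_cube cube eq by (simp_all add: pivot_cube)
      then have X_t: "res_class4 (a, b, b\<^sup>2 / a, b ^ 3 / a\<^sup>2) = res_class4 t"
        by (simp add: t_def)
      have "a \<noteq> 0"
        using X_cube zero_in_\<pp> by auto
      then have "hessian_vanishes t"
        unfolding t_def
        using hessian_vanishes_cong[OF in_R4(1) in_R4(2)[unfolded t_def] X_t[unfolded t_def]]
          hessian_vanishes_cube by blast
      then have "res_class4 t = Y"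
        using res_class4_hessian_vanishes_unit[OF in_R4(2)[unfolded t_def] _ cube(3)] cube(4)
        unfolding t_def by blast
      then show ?thesis
        using X_cube X_t by simp
    qed
  qed
qed

lemma pivot_image_nonprojective_residues: "pivot ` nonprojective_residues = residues \<times> residues"
proof
  show "pivot ` nonprojective_residues \<subseteq> residues \<times> residues"
  proof
    fix P assume "P \<in> pivot ` nonprojective_residues"
    then obtain X where X: "X \<in> nonprojective_residues" and P: "P = pivot X" by blast
    from X show "P \<in> residues \<times> residues"
      by (cases rule: nonprojective_residues_cases)
        (simp_all add: P pivot_pure_cube pivot_cube zero_in_R)
  qed
  show "residues \<times> residues \<subseteq> pivot ` nonprojective_residues"
  proof clarify
    fix a b assume ab: "a \<in> R" "b \<in> R"
    show "(res_class a, res_class b) \<in> pivot ` nonprojective_residues"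
    proof (cases "a \<in> \<pp>")
      case True
      have "res_class4 (0, 0, 0, b) \<in> nonprojective_residues"
        using ab zero_in_R hessian_vanishes_pure_cube
        by (intro res_class4_in_nonprojective_residues) simp_all
      moreover have "(res_class a, res_class b) = pivot (res_class4 (0, 0, 0, b))"
        using True ab by (simp add: pivot_pure_cube res_class_eq_0_iff)
      ultimately show ?thesis
        by (rule rev_image_eqI)
    next
      case False
      then have "a \<noteq> 0"
        using zero_in_\<pp> by auto
      then have "res_class4 (a, b, b\<^sup>2 / a, b ^ 3 / a\<^sup>2) \<in> nonprojective_residues"
        using ab False cube_coeffs_in_R hessian_vanishes_cube
        by (intro res_class4_in_nonprojective_residues) simp_all
      moreover have "(res_class a, res_class b) = pivot (res_class4 (a, b, b\<^sup>2 / a, b ^ 3 / a\<^sup>2))"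
        using False ab by (simp add: pivot_cube)
      ultimately show ?thesis
        by (rule rev_image_eqI)
    qed
  qed
qed

lemma card_nonprojective_residues:
  assumes "finite residues"
  shows "card nonprojective_residues = (card residues)\<^sup>2"
  using card_image[OF inj_on_pivot] pivot_image_nonprojective_residues assms
  by (simp add: card_cartesian_product power2_eq_square)

section \<open>Decomposition of (V_a)_p into residue blocks\<close>

fun scale :: "int \<Rightarrow> 'k form4 \<Rightarrow> 'k form4" where
  "scale k (a, b, c, d) = (w powi k * a, b, w powi (- k) * c, w powi (- 2 * k) * d)"

lemma scale_scale_uminus: "scale k (scale (- k) t) = t"
  using w_nonzero by (cases t) (simp add: mult.assoc[symmetric] power_int_add[symmetric])

lemma inj_scale: "inj (scale k)"
  by (metis injI scale_scale_uminus)

lemma scale_add4: "scale k (add4 s t) = add4 (scale k s) (scale k t)"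
  by (cases s; cases t) (simp add: add4_def algebra_simps)

lemma Vloc_eq_image_scale: "Vloc R w k = scale k ` R4"
proof
  show "Vloc R w k \<subseteq> scale k ` R4"
  proof clarify
    fix a b c d assume "(a, b, c, d) \<in> Vloc R w k"
    then obtain a' c' d' where "(a', b, c', d') \<in> R4"
      and "(a, b, c, d) = scale k (a', b, c', d')"
      unfolding Vloc_def ideal_pow_def by auto
    then show "(a, b, c, d) \<in> scale k ` R4"
      by (rule rev_image_eqI)
  qed
  show "scale k ` R4 \<subseteq> Vloc R w k"
    by (auto simp: Vloc_def ideal_pow_def)
qed

lemma Ploc_subset_Vloc: "Ploc R w k \<subseteq> Vloc R w k"
  unfolding Ploc_def by (auto split: prod.splits)

lemma scale_mem_Ploc_iff:
  assumes "t \<in> R4"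
  shows "scale k t \<in> Ploc R w k \<longleftrightarrow> \<not> hessian_vanishes t"
proof -
  obtain a b c d where t: "t = (a, b, c, d)"
    by (cases t)
  define u where "u = w powi k"
  have "w powi (2 * k) = u ^ 2"
    using power_int_mult[of w k 2] by (simp add: u_def mult.commute)
  moreover have "w powi (- 2 * k) = inverse (w powi (2 * k))"
    using power_int_minus[of w "2 * k"] by simp
  ultimately have powers: "w powi k = u" "w powi (- k) = inverse u"
    "w powi (- 2 * k) = inverse u ^ 2" "w powi (2 * k) = u ^ 2"
    by (simp_all add: u_def power_int_minus power_inverse)
  have "u \<noteq> 0"
    using w_nonzero by (simp add: u_def)
  then have hessian: "b\<^sup>2 - w powi k * a * (w powi (- k) * c) = b\<^sup>2 - a * c"
    "w powi k * (w powi k * a * (w powi (- 2 * k) * d) - b * (w powi (- k) * c)) = a * d - b * c"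
    "w powi (2 * k) * ((w powi (- k) * c)\<^sup>2 - b * (w powi (- 2 * k) * d)) = c\<^sup>2 - b * d"
    unfolding powers by (simp_all add: field_simps power2_eq_square)
  have "scale k t \<in> Vloc R w k"
    using assms by (simp add: Vloc_eq_image_scale)
  then show ?thesis
    unfolding t scale.simps Ploc_def mem_Collect_eq prod.case hessian by simp
qed

definition block :: "int \<Rightarrow> 'k set form4 \<Rightarrow> 'k form4 set" where
  "block k = (\<lambda>(A, B, C, D). scale k ` (A \<times> B \<times> C \<times> D))"

abbreviation residues4 :: "'k set form4 set" where
  "residues4 \<equiv> residues \<times> residues \<times> residues \<times> residues"

lemma scale_mem_block_iff:
  assumes "X \<in> residues4"
  shows "scale k t \<in> block k X \<longleftrightarrow> t \<in> R4 \<and> res_class4 t = X"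
proof -
  obtain x1 x2 x3 x4 where x: "x1 \<in> R" "x2 \<in> R" "x3 \<in> R" "x4 \<in> R"
    and X: "X = res_class4 (x1, x2, x3, x4)"
    using assms by auto
  have "scale k t \<in> block k X \<longleftrightarrow>
      t \<in> res_class x1 \<times> res_class x2 \<times> res_class x3 \<times> res_class x4"
    by (simp add: X block_def inj_image_mem_iff[OF inj_scale])
  also have "\<dots> \<longleftrightarrow> t \<in> R4 \<and> res_class4 t = X"
    using x by (cases t) (auto simp: X mem_res_class_iff)
  finally show ?thesis .
qed

lemma block_subset_Vloc:
  assumes "X \<in> residues4"
  shows "block k X \<subseteq> Vloc R w k"
proof -
  obtain A B C D where X: "X = (A, B, C, D)" and sub: "A \<times> B \<times> C \<times> D \<subseteq> R4"
    using assms by (auto simp: res_class_def)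
  show ?thesis
    unfolding Vloc_eq_image_scale block_def X prod.case using sub by (rule image_mono)
qed

lemma Vloc_eq_Union_blocks: "Vloc R w k = (\<Union>X\<in>residues4. block k X)"
proof
  show "Vloc R w k \<subseteq> (\<Union>X\<in>residues4. block k X)"
  proof
    fix y assume "y \<in> Vloc R w k"
    then obtain t where t: "t \<in> R4" and y: "y = scale k t"
      unfolding Vloc_eq_image_scale by blast
    then have X: "res_class4 t \<in> residues4"
      by (cases t) simp
    then have "y \<in> block k (res_class4 t)"
      using scale_mem_block_iff[OF X] t y by simp
    with X show "y \<in> (\<Union>X\<in>residues4. block k X)"
      by (rule UN_I)
  qed
  show "(\<Union>X\<in>residues4. block k X) \<subseteq> Vloc R w k"
    by (rule UN_least) (rule block_subset_Vloc)
qed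

lemma disjoint_family_on_block: "disjoint_family_on (block k) residues4"
  unfolding disjoint_family_on_def
proof (intro ballI impI)
  fix X Y assume X: "X \<in> residues4" and Y: "Y \<in> residues4" and "X \<noteq> Y"
  show "block k X \<inter> block k Y = {}"
  proof (rule ccontr)
    assume "block k X \<inter> block k Y \<noteq> {}"
    then obtain y where y: "y \<in> block k X" "y \<in> block k Y"
      by blast
    then obtain t where t: "y = scale k t"
      using block_subset_Vloc[OF X] unfolding Vloc_eq_image_scale by blast
    have "res_class4 t = X" "res_class4 t = Y"
      using y scale_mem_block_iff[OF X] scale_mem_block_iff[OF Y] unfolding t by simp_all
    with \<open>X \<noteq> Y\<close> show False
      by simp
  qed
qed

lemma res_class4_mem_residues4: "t \<in> R4 \<Longrightarrow> res_class4 t \<in> residues4"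
  by (cases t) simp

lemma nonprojective_residues_subset_residues4: "nonprojective_residues \<subseteq> residues4"
  unfolding nonprojective_residues_def using res_class4_mem_residues4 by blast

lemma res_class4_mem_nonprojective_residues_iff:
  assumes "t \<in> R4"
  shows "res_class4 t \<in> nonprojective_residues \<longleftrightarrow> hessian_vanishes t"
proof
  assume "res_class4 t \<in> nonprojective_residues"
  then obtain t' where t': "t' \<in> R4" "hessian_vanishes t'" "res_class4 t = res_class4 t'"
    unfolding nonprojective_residues_def by blast
  obtain a b c d a' b' c' d' where "t = (a, b, c, d)" "t' = (a', b', c', d')"
    by (cases t; cases t')
  then show "hessian_vanishes t"
    using hessian_vanishes_cong[of a b c d a' b' c' d'] assms t' by simp
qed (rule res_class4_in_nonprojective_residues[OF assms])

lemma Ploc_eq_Diff_blocks: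
  "Ploc R w k = Vloc R w k - (\<Union>X\<in>nonprojective_residues. block k X)"
proof (rule set_eqI)
  fix y
  show "y \<in> Ploc R w k \<longleftrightarrow> y \<in> Vloc R w k - (\<Union>X\<in>nonprojective_residues. block k X)"
  proof (cases "y \<in> Vloc R w k")
    case True
    then obtain t where t: "t \<in> R4" and y: "y = scale k t"
      unfolding Vloc_eq_image_scale by blast
    have "y \<in> block k X \<longleftrightarrow> res_class4 t = X" if "X \<in> nonprojective_residues" for X
      using that t res_class4_mem_residues4[OF t] scale_mem_block_iff[of X k t]
      unfolding y nonprojective_residues_def by auto
    then have "y \<in> (\<Union>X\<in>nonprojective_residues. block k X) \<longleftrightarrow> hessian_vanishes t"
      using res_class4_mem_nonprojective_residues_iff[OF t] by auto
    then show ?thesis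
      using True scale_mem_Ploc_iff[OF t] y by simp
  next
    case False
    then show ?thesis
      using Ploc_subset_Vloc by blast
  qed
qed

lemma block_translate:
  assumes "x \<in> R4"
  shows "block k (res_class4 x) = add4 (scale k x) ` block k (res_class4 (0, 0, 0, 0))"
proof -
  obtain x1 x2 x3 x4 where x: "x = (x1, x2, x3, x4)"
    by (cases x)
  have "res_class x1 \<times> res_class x2 \<times> res_class x3 \<times> res_class x4 =
      add4 x ` (res_class 0 \<times> res_class 0 \<times> res_class 0 \<times> res_class 0)"
    using assms unfolding x add4_image_Times
    by (simp add: res_class_translate)
  then show ?thesis
    by (simp add: x block_def image_image scale_add4)
qed

lemma power_mult_mem_\<pp>: "x \<in> ideal_pow R w n \<Longrightarrow> 1 \<le> n + j \<Longrightarrow> w powi j * x \<in> \<pp>"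
  using power_mult_mem_ideal_pow ideal_pow_antimono by blast

lemma res_class4_add4:
  assumes "t \<in> R4" "s \<in> \<pp> \<times> \<pp> \<times> \<pp> \<times> \<pp>"
  shows "add4 t s \<in> R4" "res_class4 (add4 t s) = res_class4 t"
proof -
  have "x + e \<in> R" "res_class (x + e) = res_class x" if "x \<in> R" "e \<in> \<pp>" for x e
    using that add_in_R \<pp>_subset_R res_class_eq_iff[of "x + e" x] by auto
  then show "add4 t s \<in> R4" "res_class4 (add4 t s) = res_class4 t"
    using assms by (cases t; cases s; simp add: add4_def)+
qed

lemma adic_open4_block:
  assumes "X \<in> residues4"
  shows "adic_open4 R w (block k X)"
  unfolding adic_open4_def
proof
  fix y assume "y \<in> block k X"
  moreover obtain t where t: "t \<in> R4" and y: "y = scale k t"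
    using calculation block_subset_Vloc[OF assms] unfolding Vloc_eq_image_scale by blast
  ultimately have X: "res_class4 t = X"
    using scale_mem_block_iff[OF assms] by simp
  define n where "n = nat (2 * \<bar>k\<bar> + 1)"
  have "nbhd4 R w y n \<subseteq> block k X"
  proof
    fix v assume "v \<in> nbhd4 R w y n"
    then obtain z1 z2 z3 z4 where z: "z1 \<in> ideal_pow R w n" "z2 \<in> ideal_pow R w n"
        "z3 \<in> ideal_pow R w n" "z4 \<in> ideal_pow R w n"
      and v: "v = add4 y (z1, z2, z3, z4)"
      unfolding nbhd4_def by blast
    define s where "s = scale (- k) (z1, z2, z3, z4)"
    have "s \<in> \<pp> \<times> \<pp> \<times> \<pp> \<times> \<pp>"
      using power_mult_mem_\<pp>[OF z(1), of "- k"] power_mult_mem_\<pp>[OF z(2), of 0]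
        power_mult_mem_\<pp>[OF z(3), of k] power_mult_mem_\<pp>[OF z(4), of "2 * k"]
      by (simp add: s_def n_def)
    then have "add4 t s \<in> R4" "res_class4 (add4 t s) = X"
      using res_class4_add4 t X by simp_all
    moreover have "v = scale k (add4 t s)"
      by (simp only: v y s_def scale_add4 scale_scale_uminus)
    ultimately show "v \<in> block k X"
      using scale_mem_block_iff[OF assms] by simp
  qed
  then show "\<exists>n. nbhd4 R w y n \<subseteq> block k X" ..
qed

lemma block_in_sets:
  assumes "haar_prob_V R w k \<mu>" "X \<in> residues4"
  shows "block k X \<in> sets \<mu>"
proof -
  have "block k X = block k X \<inter> Vloc R w k"
    using block_subset_Vloc[OF assms(2)] by blast
  then have "block k X \<in> {U \<inter> Vloc R w k | U. adic_open4 R w U}"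
    using adic_open4_block[OF assms(2)] by blast
  then show ?thesis
    using assms(1) unfolding haar_prob_V_def borel_V_def by (auto intro: sigma_sets.Basic)
qed

lemma emeasure_block:
  assumes "haar_prob_V R w k \<mu>" "X \<in> residues4"
  shows "emeasure \<mu> (block k X) = emeasure \<mu> (block k (res_class4 (0, 0, 0, 0)))"
proof -
  obtain x1 x2 x3 x4 where x: "(x1, x2, x3, x4) \<in> R4" "X = res_class4 (x1, x2, x3, x4)"
    using assms(2) by auto
  have "scale k (x1, x2, x3, x4) \<in> Vloc R w k"
    using x(1) unfolding Vloc_eq_image_scale by (rule imageI)
  moreover have "block k (res_class4 (0, 0, 0, 0)) \<in> sets \<mu>"
    using block_in_sets[OF assms(1)] zero_in_R by simp
  ultimately show ?thesis
    using assms(1) block_translate[OF x(1)] unfolding x(2) haar_prob_V_def by simp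
qed

end

theorem mainTheorem9:
  fixes R :: "'k::field_char_0 set" and w :: 'k and q :: nat and k :: int
    and \<mu> :: "'k form4 measure"
  assumes "complete_dvr R w q"
    and "haar_prob_V R w k \<mu>"
  shows "emeasure \<mu> (Ploc R w k) = ennreal (1 - 1 / (real q)\<^sup>2)"
proof -
  interpret dvr R w
    using assms(1) by (rule complete_dvr_imp_dvr)
  have residues: "finite residues" "card residues = q"
    using assms(1) by (simp_all add: complete_dvr_def residue_classes_eq[symmetric])
  have "emeasure \<mu> (Ploc R w k) =
      ennreal (1 - card nonprojective_residues / card residues4)"
    unfolding Ploc_eq_Diff_blocks Vloc_eq_Union_blocks[of k]
  proof (rule emeasure_Diff_Union_equal_parts)
    show "emeasure \<mu> (\<Union>X\<in>residues4. block k X) = 1"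
      using assms(2) by (simp add: haar_prob_V_def Vloc_eq_Union_blocks[symmetric])
  qed (use residues(1) nonprojective_residues_subset_residues4 disjoint_family_on_block
      block_in_sets[OF assms(2)] emeasure_block[OF assms(2)] in auto)
  also have "card nonprojective_residues / card residues4 = 1 / (real q)\<^sup>2"
    using residues card_nonprojective_residues
    by (cases "q = 0") (simp_all add: card_cartesian_product power2_eq_square)
  finally show ?thesis .
qed

end
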